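(* Let $P$ be a join-semilattice with a least element. Then $\dim_\vee(P)\leq\dim_\nabla(\mathrm{Id}(P))$, and equality holds if $\dim_\vee(P)$ is finite.
   Context: $\mathrm{Id}(P)$ is the complete lattice of ideals of $P$ (non-empty up-directed initial segments) ordered by inclusion. $\dim_\vee(P)$ is the least cardinal $\kappa$ such that $P$ admits a one-to-one join-preserving map into a direct product of $\kappa$ chains. $\dim_\nabla(L)$, for a complete lattice $L$, is the least cardinal $\kappa$ such that $L$ admits a one-to-one map preserving arbitrary joins into a direct product of $\kappa$ complete chains. *)

theory Defs
  imports Main
begin

text \<open>A join-semilattice with a least element is modelled by a type of class
  semilattice_sup + order_bot; P is the whole type.\<close>

definition is_ideal :: "'a::order set \<Rightarrow> bool" where
  "is_ideal X \<longleftrightarrow> X \<noteq> {} \<and> (\<forall>x\<in>X. \<forall>y. y \<le> x \<longrightarrow> y \<in> X)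
      \<and> (\<forall>x\<in>X. \<forall>y\<in>X. \<exists>z\<in>X. x \<le> z \<and> y \<le> z)"

definition Id_lattice :: "'a::order set set" where
  "Id_lattice = {X. is_ideal X}"

definition chain_on :: "'c set \<Rightarrow> ('c \<Rightarrow> 'c \<Rightarrow> bool) \<Rightarrow> bool" where
  "chain_on C le \<longleftrightarrow> (\<forall>x\<in>C. le x x)
     \<and> (\<forall>x\<in>C. \<forall>y\<in>C. le x y \<and> le y x \<longrightarrow> x = y)
     \<and> (\<forall>x\<in>C. \<forall>y\<in>C. \<forall>z\<in>C. le x y \<and> le y z \<longrightarrow> le x z)
     \<and> (\<forall>x\<in>C. \<forall>y\<in>C. le x y \<or> le y x)"

definition is_lub :: "'c set \<Rightarrow> ('c \<Rightarrow> 'c \<Rightarrow> bool) \<Rightarrow> 'c set \<Rightarrow> 'c \<Rightarrow> bool" where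
  "is_lub C le S z \<longleftrightarrow> z \<in> C \<and> (\<forall>s\<in>S. le s z) \<and> (\<forall>u\<in>C. (\<forall>s\<in>S. le s u) \<longrightarrow> le z u)"

definition complete_chain :: "'c set \<Rightarrow> ('c \<Rightarrow> 'c \<Rightarrow> bool) \<Rightarrow> bool" where
  "complete_chain C le \<longleftrightarrow> chain_on C le \<and> (\<forall>S\<subseteq>C. \<exists>z. is_lub C le S z)"

text \<open>f is a one-to-one join-preserving map from P (the whole type 'a) into the
  direct product of the chains (C i, L i), i \<in> I.  Joins in a product are
  computed componentwise.\<close>
definition vee_embedding ::
  "'i set \<Rightarrow> ('i \<Rightarrow> 'c set) \<Rightarrow> ('i \<Rightarrow> 'c \<Rightarrow> 'c \<Rightarrow> bool) \<Rightarrow> ('a::semilattice_sup \<Rightarrow> 'i \<Rightarrow> 'c) \<Rightarrow> bool"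
where
  "vee_embedding I C L f \<longleftrightarrow>
     (\<forall>i\<in>I. chain_on (C i) (L i))
   \<and> (\<forall>x. \<forall>i\<in>I. f x i \<in> C i)
   \<and> (\<forall>x y. \<forall>i\<in>I. is_lub (C i) (L i) {f x i, f y i} (f (sup x y) i))
   \<and> (\<forall>x y. (\<forall>i\<in>I. f x i = f y i) \<longrightarrow> x = y)"

definition nabla_embedding ::
  "'b set \<Rightarrow> ('b \<Rightarrow> 'b \<Rightarrow> bool) \<Rightarrow> 'i set \<Rightarrow> ('i \<Rightarrow> 'c set) \<Rightarrow> ('i \<Rightarrow> 'c \<Rightarrow> 'c \<Rightarrow> bool)
     \<Rightarrow> ('b \<Rightarrow> 'i \<Rightarrow> 'c) \<Rightarrow> bool"
where
  "nabla_embedding A leA I C L g \<longleftrightarrow>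
     (\<forall>i\<in>I. complete_chain (C i) (L i))
   \<and> (\<forall>x\<in>A. \<forall>i\<in>I. g x i \<in> C i)
   \<and> (\<forall>S\<subseteq>A. \<forall>x. is_lub A leA S x \<longrightarrow>
        (\<forall>i\<in>I. is_lub (C i) (L i) ((\<lambda>y. g y i) ` S) (g x i)))
   \<and> (\<forall>x\<in>A. \<forall>y\<in>A. (\<forall>i\<in>I. g x i = g y i) \<longrightarrow> x = y)"

end

theory Submission
  imports Defs
begin

text \<open>Composing a join-complete embedding of \<open>Id(P)\<close> with the principal-ideal map
  \<open>x \<mapsto> \<down>x\<close> gives a join-embedding of \<open>P\<close>, since \<open>\<down>(x \<squnion> y)\<close> is the join of \<open>\<down>x\<close> and \<open>\<down>y\<close>
  in \<open>Id(P)\<close>.  Conversely, a join-homomorphism \<open>h\<close> of \<open>P\<close> into a chain \<open>D\<close> extends to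
  \<open>Id(P)\<close> by sending an ideal \<open>X\<close> to the down-closure of \<open>h[X]\<close>, a point of the complete
  chain of down-sets of \<open>D\<close> containing \<open>h \<bottom>\<close>.  This extension preserves arbitrary joins
  because the preimage under \<open>h\<close> of a down-set containing \<open>h \<bottom>\<close> is an ideal.  For a
  join-embedding \<open>f\<close> into finitely many chains, the product of these extensions is
  one-to-one: if the ideals \<open>X\<close> and \<open>Y\<close> have the same image and \<open>x \<in> X\<close>, each coordinate
  of \<open>f x\<close> is dominated by that of \<open>f y\<close> for some \<open>y \<in> Y\<close>; an upper bound \<open>z \<in> Y\<close> of
  these finitely many \<open>y\<close> satisfies \<open>f (x \<squnion> z) = f z\<close>, hence \<open>x \<le> z\<close>.\<close>

lemma is_idealI:
  assumes "X \<noteq> {}" and "\<And>x y. x \<in> X \<Longrightarrow> y \<le> x \<Longrightarrow> y \<in> X"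
    and "\<And>x y. x \<in> X \<Longrightarrow> y \<in> X \<Longrightarrow> \<exists>z\<in>X. x \<le> z \<and> y \<le> z"
  shows "is_ideal X"
  using assms unfolding is_ideal_def by blast

lemma ideal_down_closed: "is_ideal X \<Longrightarrow> x \<in> X \<Longrightarrow> y \<le> x \<Longrightarrow> y \<in> X"
  unfolding is_ideal_def by blast

lemma ideal_sup_closed:
  assumes "is_ideal (X::'a::semilattice_sup set)" "x \<in> X" "y \<in> X"
  shows "sup x y \<in> X"
proof -
  obtain z where "z \<in> X" "x \<le> z" "y \<le> z"
    using assms unfolding is_ideal_def by metis
  then show ?thesis using ideal_down_closed[OF assms(1)] by simp
qed

lemma ideal_bot: "is_ideal (X::'a::order_bot set) \<Longrightarrow> bot \<in> X"
  unfolding is_ideal_def by (meson bot_least ex_in_conv)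

lemma ideal_finite_upper_bound:
  assumes "is_ideal (X::'a::{semilattice_sup,order_bot} set)" "finite F" "F \<subseteq> X"
  shows "\<exists>z\<in>X. \<forall>y\<in>F. y \<le> z"
  using assms(2,3)
proof (induction F rule: finite_induct)
  case empty
  then show ?case using ideal_bot[OF assms(1)] by blast
next
  case (insert a F)
  then obtain z where "z \<in> X" "\<forall>y\<in>F. y \<le> z" by auto
  moreover have "sup a z \<in> X" using ideal_sup_closed[OF assms(1)] insert.prems \<open>z \<in> X\<close> by simp
  ultimately show ?case by (metis insert_iff le_supI2 sup_ge1)
qed

lemma principal_ideal: "is_ideal {y::'a::semilattice_sup. y \<le> x}"
  by (rule is_idealI) (auto intro: order_trans)

lemma principal_ideal_sup:
  "is_lub Id_lattice (\<subseteq>) {{y::'a::semilattice_sup. y \<le> a}, {y. y \<le> b}} {y. y \<le> sup a b}"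
  unfolding is_lub_def Id_lattice_def
proof (intro conjI ballI impI)
  fix U assume "U \<in> {X. is_ideal X}" "\<forall>s\<in>{{y. y \<le> a}, {y. y \<le> b}}. s \<subseteq> U"
  then have "sup a b \<in> U" using ideal_sup_closed[of U a b] by auto
  then show "{y. y \<le> sup a b} \<subseteq> U" using \<open>U \<in> _\<close> ideal_down_closed by blast
qed (use principal_ideal in \<open>auto intro: le_supI1 le_supI2\<close>)

subsection \<open>Chains and their down-sets\<close>

lemma chain_on_refl: "chain_on C le \<Longrightarrow> x \<in> C \<Longrightarrow> le x x"
  unfolding chain_on_def by blast

lemma chain_on_antisym: "chain_on C le \<Longrightarrow> x \<in> C \<Longrightarrow> y \<in> C \<Longrightarrow> le x y \<Longrightarrow> le y x \<Longrightarrow> x = y"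
  unfolding chain_on_def by blast

lemma chain_on_trans:
  "chain_on C le \<Longrightarrow> x \<in> C \<Longrightarrow> y \<in> C \<Longrightarrow> z \<in> C \<Longrightarrow> le x y \<Longrightarrow> le y z \<Longrightarrow> le x z"
  unfolding chain_on_def by blast

lemma chain_on_total: "chain_on C le \<Longrightarrow> x \<in> C \<Longrightarrow> y \<in> C \<Longrightarrow> le x y \<or> le y x"
  unfolding chain_on_def by blast

lemma chain_on_lub_pair:
  assumes C: "chain_on C le" and "a \<in> C" "b \<in> C" and lub: "is_lub C le {a, b} z"
  shows "z = a \<or> z = b"
proof -
  have "z \<in> C" "le a z" "le b z" "\<And>u. u \<in> C \<Longrightarrow> le a u \<Longrightarrow> le b u \<Longrightarrow> le z u"
    using lub unfolding is_lub_def by auto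
  with assms(2,3) chain_on_total[OF C, of a b] chain_on_refl[OF C] chain_on_antisym[OF C]
  show ?thesis by metis
qed

definition down_closure :: "'c set \<Rightarrow> ('c \<Rightarrow> 'c \<Rightarrow> bool) \<Rightarrow> 'c set \<Rightarrow> 'c set" where
  "down_closure C le A = {d \<in> C. \<exists>a\<in>A. le d a}"

definition down_sets_containing :: "'c set \<Rightarrow> ('c \<Rightarrow> 'c \<Rightarrow> bool) \<Rightarrow> 'c \<Rightarrow> 'c set set" where
  "down_sets_containing C le c =
     {T. T \<subseteq> C \<and> (\<forall>t\<in>T. \<forall>d\<in>C. le d t \<longrightarrow> d \<in> T) \<and> c \<in> T}"

lemma down_closure_mono: "A \<subseteq> B \<Longrightarrow> down_closure C le A \<subseteq> down_closure C le B"
  unfolding down_closure_def by blast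

lemma down_closure_in_down_sets_containing:
  assumes "chain_on C le" "A \<subseteq> C" "c \<in> C" "a \<in> A" "le c a"
  shows "down_closure C le A \<in> down_sets_containing C le c"
  using assms chain_on_trans[OF assms(1)]
  unfolding down_closure_def down_sets_containing_def by blast

lemma down_closure_subset_down_set:
  "T \<in> down_sets_containing C le c \<Longrightarrow> A \<subseteq> T \<Longrightarrow> down_closure C le A \<subseteq> T"
  unfolding down_closure_def down_sets_containing_def by blast

text \<open>The summand \<open>down_closure C le {c}\<close> is the least element; it matters only for \<open>S = {}\<close>.\<close>

lemma is_lub_down_sets_containing:
  assumes C: "chain_on C le" and "c \<in> C" and S: "S \<subseteq> down_sets_containing C le c"
  shows "is_lub (down_sets_containing C le c) (\<subseteq>) S (down_closure C le {c} \<union> \<Union>S)"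
proof -
  have "down_closure C le {c} \<in> down_sets_containing C le c"
    using down_closure_in_down_sets_containing[OF C] chain_on_refl[OF C] \<open>c \<in> C\<close> by blast
  then have "down_closure C le {c} \<union> \<Union>S \<in> down_sets_containing C le c"
    using S unfolding down_sets_containing_def by blast
  moreover have "down_closure C le {c} \<subseteq> T" if "T \<in> down_sets_containing C le c" for T
    using down_closure_subset_down_set[OF that] that unfolding down_sets_containing_def by blast
  ultimately show ?thesis unfolding is_lub_def by blast
qed

lemma complete_chain_down_sets_containing:
  assumes C: "chain_on C le" and "c \<in> C"
  shows "complete_chain (down_sets_containing C le c) (\<subseteq>)"
proof -
  have "T \<subseteq> U \<or> U \<subseteq> T"
    if "T \<in> down_sets_containing C le c" "U \<in> down_sets_containing C le c" for T U
    using that chain_on_total[OF C] unfolding down_sets_containing_def by blast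
  then have "chain_on (down_sets_containing C le c) (\<subseteq>)"
    unfolding chain_on_def by blast
  then show ?thesis
    using is_lub_down_sets_containing[OF assms] unfolding complete_chain_def by blast
qed

subsection \<open>Extending a join-homomorphism into a chain to the ideals\<close>

locale join_hom_into_chain =
  fixes C :: "'c set" and le :: "'c \<Rightarrow> 'c \<Rightarrow> bool"
    and h :: "'a::{semilattice_sup,order_bot} \<Rightarrow> 'c"
  assumes chain: "chain_on C le"
    and maps_into: "h x \<in> C"
    and preserves_sup: "is_lub C le {h x, h y} (h (sup x y))"
begin

lemma mono: "x \<le> y \<Longrightarrow> le (h x) (h y)"
  using preserves_sup[of x y] by (simp add: sup_absorb2 is_lub_def)

lemma sup_cases: "h (sup x y) = h x \<or> h (sup x y) = h y"
  using chain_on_lub_pair[OF chain maps_into maps_into preserves_sup] .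

lemma sup_absorb_image:
  assumes "le (h x) (h y)"
  shows "h (sup x y) = h y"
proof -
  have "le (h y) (h (sup x y))" by (rule mono) simp
  then show ?thesis
    using sup_cases[of x y] assms chain_on_antisym[OF chain maps_into maps_into] by metis
qed

lemma ideal_preimage:
  assumes T: "T \<in> down_sets_containing C le (h bot)"
  shows "is_ideal {x. h x \<in> T}"
proof (rule is_idealI)
  show "{x. h x \<in> T} \<noteq> {}" using T unfolding down_sets_containing_def by blast
next
  fix x y assume "x \<in> {x. h x \<in> T}" "y \<le> x"
  then show "y \<in> {x. h x \<in> T}"
    using T mono maps_into unfolding down_sets_containing_def by blast
next
  fix x y assume "x \<in> {x. h x \<in> T}" "y \<in> {x. h x \<in> T}"
  then show "\<exists>z\<in>{x. h x \<in> T}. x \<le> z \<and> y \<le> z"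
    using sup_cases[of x y] by (metis mem_Collect_eq sup_ge1 sup_ge2)
qed

abbreviation extend :: "'a set \<Rightarrow> 'c set" where
  "extend X \<equiv> down_closure C le (h ` X)"

lemma extend_in_down_sets_containing:
  "is_ideal X \<Longrightarrow> extend X \<in> down_sets_containing C le (h bot)"
  by (rule down_closure_in_down_sets_containing)
     (use chain maps_into chain_on_refl[OF chain] ideal_bot in auto)

lemma extend_mono: "X \<subseteq> Y \<Longrightarrow> extend X \<subseteq> extend Y"
  by (intro down_closure_mono image_mono)

lemma image_subset_extend: "h ` X \<subseteq> extend X"
  unfolding down_closure_def using maps_into chain_on_refl[OF chain] by blast

lemma extend_lub:
  assumes S: "S \<subseteq> Id_lattice" and X: "is_lub Id_lattice (\<subseteq>) S X"
  shows "extend X = down_closure C le {h bot} \<union> \<Union>(extend ` S)"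
    (is "_ = ?T")
proof
  have X_ideal: "is_ideal X" and upper: "\<And>Y. Y \<in> S \<Longrightarrow> Y \<subseteq> X"
    using X unfolding is_lub_def Id_lattice_def by auto
  have "h ` {bot} \<subseteq> extend X"
    using image_subset_extend ideal_bot[OF X_ideal] by blast
  moreover have "extend Y \<subseteq> extend X" if "Y \<in> S" for Y
    using extend_mono upper[OF that] .
  ultimately show "?T \<subseteq> extend X"
    using down_closure_subset_down_set[OF extend_in_down_sets_containing[OF X_ideal]] by blast
next
  have "extend ` S \<subseteq> down_sets_containing C le (h bot)"
    using S extend_in_down_sets_containing unfolding Id_lattice_def by blast
  then have T: "?T \<in> down_sets_containing C le (h bot)"
    using is_lub_down_sets_containing[OF chain maps_into] unfolding is_lub_def by blast
  have "Y \<subseteq> {x. h x \<in> ?T}" if "Y \<in> S" for Y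
    using that image_subset_extend by blast
  then have "X \<subseteq> {x. h x \<in> ?T}"
    using X ideal_preimage[OF T] unfolding is_lub_def Id_lattice_def by blast
  then have "h ` X \<subseteq> ?T" by blast
  then show "extend X \<subseteq> ?T"
    by (rule down_closure_subset_down_set[OF T])
qed

end

lemma vee_embedding_of_nabla_embedding:
  fixes g :: "'a::semilattice_sup set \<Rightarrow> 'i \<Rightarrow> 'c"
  assumes g: "nabla_embedding Id_lattice (\<subseteq>) I C L g"
  shows "vee_embedding I C L (\<lambda>x. g {y. y \<le> x})"
proof -
  have chains: "\<forall>i\<in>I. complete_chain (C i) (L i)"
    and maps_into: "\<forall>X\<in>Id_lattice. \<forall>i\<in>I. g X i \<in> C i"
    and preserves_lub: "\<forall>S\<subseteq>Id_lattice. \<forall>X. is_lub Id_lattice (\<subseteq>) S X \<longrightarrow>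
                          (\<forall>i\<in>I. is_lub (C i) (L i) ((\<lambda>Y. g Y i) ` S) (g X i))"
    and injective: "\<forall>X\<in>Id_lattice. \<forall>Y\<in>Id_lattice. (\<forall>i\<in>I. g X i = g Y i) \<longrightarrow> X = Y"
    using g unfolding nabla_embedding_def by simp_all
  have principal: "{y. y \<le> x} \<in> Id_lattice" for x :: 'a
    using principal_ideal unfolding Id_lattice_def by blast
  have "is_lub (C i) (L i) {g {z. z \<le> x} i, g {z. z \<le> y} i} (g {z. z \<le> sup x y} i)"
    if "i \<in> I" for x y i
    using preserves_lub[rule_format, OF _ principal_ideal_sup that] principal by simp
  moreover have "x = y" if "\<forall>i\<in>I. g {z. z \<le> x} i = g {z. z \<le> y} i" for x y :: 'a
  proof -
    have "{z. z \<le> x} = {z. z \<le> y}" using injective principal that by blast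
    then show "x = y" by (metis antisym mem_Collect_eq order_refl)
  qed
  ultimately show ?thesis
    using chains maps_into principal unfolding vee_embedding_def complete_chain_def by blast
qed

lemma join_hom_into_chain_coordinate:
  fixes f :: "'a::{semilattice_sup,order_bot} \<Rightarrow> 'j \<Rightarrow> 'd"
  assumes "vee_embedding J D M f" "j \<in> J"
  shows "join_hom_into_chain (D j) (M j) (\<lambda>x. f x j)"
  using assms unfolding vee_embedding_def by unfold_locales auto

lemma finite_vee_embedding_reflects_down_closure_subset:
  fixes f :: "'a::{semilattice_sup,order_bot} \<Rightarrow> 'j \<Rightarrow> 'd"
  assumes J: "finite J" and f: "vee_embedding J D M f" and Y: "is_ideal Y"
    and sub: "\<forall>j\<in>J. down_closure (D j) (M j) ((\<lambda>x. f x j) ` X)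
                   \<subseteq> down_closure (D j) (M j) ((\<lambda>x. f x j) ` Y)"
  shows "X \<subseteq> Y"
proof
  fix x assume "x \<in> X"
  have "\<exists>y\<in>Y. M j (f x j) (f y j)" if j: "j \<in> J" for j
  proof -
    interpret join_hom_into_chain "D j" "M j" "\<lambda>x. f x j"
      by (rule join_hom_into_chain_coordinate[OF f j])
    have "f x j \<in> extend Y" using image_subset_extend sub j \<open>x \<in> X\<close> by blast
    then show ?thesis unfolding down_closure_def by blast
  qed
  then obtain w where w: "\<And>j. j \<in> J \<Longrightarrow> w j \<in> Y \<and> M j (f x j) (f (w j) j)" by metis
  then obtain z where "z \<in> Y" and z: "\<forall>j\<in>J. w j \<le> z"
    using ideal_finite_upper_bound[OF Y, of "w ` J"] J by blast
  have "f (sup x z) j = f z j" if j: "j \<in> J" for j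
  proof -
    interpret join_hom_into_chain "D j" "M j" "\<lambda>x. f x j"
      by (rule join_hom_into_chain_coordinate[OF f j])
    have "M j (f x j) (f z j)"
      using w[OF j] mono[of "w j" z] z j chain_on_trans[OF chain] maps_into by blast
    then show ?thesis by (rule sup_absorb_image)
  qed
  then have "sup x z = z" using f unfolding vee_embedding_def by blast
  then show "x \<in> Y" using ideal_down_closed[OF Y \<open>z \<in> Y\<close>] by (metis sup_ge1)
qed

lemma nabla_embedding_of_finite_vee_embedding:
  fixes f :: "'a::{semilattice_sup,order_bot} \<Rightarrow> 'j \<Rightarrow> 'd"
  assumes J: "finite J" and f: "vee_embedding J D M f"
  shows "nabla_embedding Id_lattice (\<subseteq>) J (\<lambda>j. down_sets_containing (D j) (M j) (f bot j))
           (\<lambda>_. (\<subseteq>)) (\<lambda>X j. down_closure (D j) (M j) ((\<lambda>x. f x j) ` X))"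
  unfolding nabla_embedding_def
proof (intro conjI ballI allI impI)
  fix j assume j: "j \<in> J"
  interpret join_hom_into_chain "D j" "M j" "\<lambda>x. f x j"
    by (rule join_hom_into_chain_coordinate[OF f j])
  show "complete_chain (down_sets_containing (D j) (M j) (f bot j)) (\<subseteq>)"
    using complete_chain_down_sets_containing[OF chain maps_into] .
  show "extend X \<in> down_sets_containing (D j) (M j) (f bot j)" if "X \<in> Id_lattice" for X
    using extend_in_down_sets_containing that unfolding Id_lattice_def by blast
  show "is_lub (down_sets_containing (D j) (M j) (f bot j)) (\<subseteq>) (extend ` S) (extend X)"
    if S: "S \<subseteq> Id_lattice" and X: "is_lub Id_lattice (\<subseteq>) S X" for S X
  proof -
    have "extend ` S \<subseteq> down_sets_containing (D j) (M j) (f bot j)"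
      using S extend_in_down_sets_containing unfolding Id_lattice_def by blast
    from is_lub_down_sets_containing[OF chain maps_into this]
    show ?thesis unfolding extend_lub[OF S X] .
  qed
next
  fix X Y :: "'a set" assume "X \<in> Id_lattice" "Y \<in> Id_lattice"
    and eq: "\<forall>j\<in>J. down_closure (D j) (M j) ((\<lambda>x. f x j) ` X) = down_closure (D j) (M j) ((\<lambda>x. f x j) ` Y)"
  then have "is_ideal X" "is_ideal Y" unfolding Id_lattice_def by auto
  with eq show "X = Y"
    using finite_vee_embedding_reflects_down_closure_subset[OF J f] by (simp add: subset_antisym)
qed

theorem proposition7p6:
  shows
    "(\<forall>(I::'i set) (C::'i \<Rightarrow> 'c set) L (g::'a::{semilattice_sup, order_bot} set \<Rightarrow> 'i \<Rightarrow> 'c).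
        nabla_embedding Id_lattice (\<subseteq>) I C L g \<longrightarrow>
        (\<exists>(J::'i set) (D::'i \<Rightarrow> 'c set) M (f::'a \<Rightarrow> 'i \<Rightarrow> 'c).
            (card_of J, card_of I) \<in> ordLeq \<and> vee_embedding J D M f))
   \<and> (\<forall>(J::'j set) (D::'j \<Rightarrow> 'd set) M (f::'a \<Rightarrow> 'j \<Rightarrow> 'd).
        finite J \<and> vee_embedding J D M f \<longrightarrow>
        (\<exists>(I::'j set) (C::'j \<Rightarrow> 'd set set) L (g::'a set \<Rightarrow> 'j \<Rightarrow> 'd set).
            (card_of I, card_of J) \<in> ordLeq \<and> nabla_embedding Id_lattice (\<subseteq>) I C L g))"
proof (intro conjI allI impI)
  fix I :: "'i set" and C L and g :: "'a set \<Rightarrow> 'i \<Rightarrow> 'c"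
  assume "nabla_embedding Id_lattice (\<subseteq>) I C L g"
  from vee_embedding_of_nabla_embedding[OF this] card_of_mono1[OF order_refl, of I]
  show "\<exists>J D M (f::'a \<Rightarrow> 'i \<Rightarrow> 'c). (card_of J, card_of I) \<in> ordLeq \<and> vee_embedding J D M f"
    by blast
next
  fix J :: "'j set" and D M and f :: "'a \<Rightarrow> 'j \<Rightarrow> 'd"
  assume "finite J \<and> vee_embedding J D M f"
  then have "nabla_embedding Id_lattice (\<subseteq>) J (\<lambda>j. down_sets_containing (D j) (M j) (f bot j))
      (\<lambda>_. (\<subseteq>)) (\<lambda>X j. down_closure (D j) (M j) ((\<lambda>x. f x j) ` X))"
    using nabla_embedding_of_finite_vee_embedding by blast
  with card_of_mono1[OF order_refl, of J]
  show "\<exists>I C L (g::'a set \<Rightarrow> 'j \<Rightarrow> 'd set).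
      (card_of I, card_of J) \<in> ordLeq \<and> nabla_embedding Id_lattice (\<subseteq>) I C L g"
    by blast
qed

end
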